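(* Let $X_1,X_2,\dots$ be i.i.d. real random variables with mean $\mu\ge0$, variance $\sigma^2>0$, and $\delta:=\mathbb{P}(X_1\ge1)>0$. Let $S_0=0$ and $S_k=X_1+\dots+X_k$. Then for every $N\ge1$, \[ \mathbb{P}\big(S_k\ge0\text{ for }k=1,2,\dots,N\big)\le\frac{4\sigma}{\delta\sqrt N}+\frac{\mu}{\delta}. \] *)

theory Defs
  imports "HOL-Probability.Probability"
begin

end

theory Submission
  imports Defs
begin

text \<open>
  Call \<open>m < N\<close> a ladder time if \<open>X m \<ge> 1\<close> and the walk restarted after step \<open>m\<close> does not
  drop below \<open>S (m + 1)\<close> up to time \<open>N\<close>. Every ladder time raises the future minimum
  \<open>min {S k | m \<le> k \<le> N}\<close> by at least 1, so there are at most \<open>S N - min {S k | k \<le> N}\<close>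
  of them, and since \<open>\<mu> \<ge> 0\<close> this is at most \<open>S N + max {Y k | k \<le> N}\<close> for the centred walk
  \<open>Y k = k \<mu> - S k\<close>. By independence and stationarity, \<open>m\<close> is a ladder time with probability
  \<open>\<delta> \<cdot> P(S k \<ge> 0 for 1 \<le> k < N - m) \<ge> \<delta> P\<close>, where \<open>P\<close> is the probability to be bounded.
  Taking expectations, \<open>N \<delta> P \<le> N \<mu> + E (max {Y k | k \<le> N})\<close>.

  For the martingale \<open>Y\<close> with running maximum \<open>Z i = max {Y k | k \<le> i}\<close>, a pathwise form of
  Doob's inequality gives \<open>Z N\<^sup>2 / 4 \<le> Y N\<^sup>2 - (\<Sum>i<N. Z i (Y (i + 1) - Y i))\<close>. The subtracted
  sum has mean zero and \<open>E (Y N\<^sup>2) = N \<sigma>\<^sup>2\<close>, so \<open>Z N \<le> a + Z N\<^sup>2 / (4 a)\<close> yields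
  \<open>E (Z N) \<le> a + N \<sigma>\<^sup>2 / a\<close> for every \<open>a > 0\<close>. The choice \<open>a = \<sigma> \<surd>N\<close> gives
  \<open>\<delta> P \<le> \<mu> + 2 \<sigma> / \<surd>N\<close>.
\<close>

primrec running_max :: "(nat \<Rightarrow> real) \<Rightarrow> nat \<Rightarrow> real" where
  "running_max y 0 = y 0"
| "running_max y (Suc n) = max (running_max y n) (y (Suc n))"

lemma running_max_ge: "k \<le> n \<Longrightarrow> y k \<le> running_max y n"
  by (induction n) (auto simp: le_Suc_eq max.coboundedI1)

lemma running_max_cong: "(\<And>k. k \<le> n \<Longrightarrow> y k = y' k) \<Longrightarrow> running_max y n = running_max y' n"
  by (induction n) auto

lemma borel_measurable_running_max[measurable]:
  assumes [measurable]: "\<And>k. (\<lambda>x. f k x) \<in> borel_measurable M"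
  shows "(\<lambda>x. running_max (\<lambda>k. f k x) n) \<in> borel_measurable M"
  by (induction n) auto

lemma integrable_running_max:
  assumes "\<And>k. integrable M (\<lambda>x. f k x)"
  shows "integrable M (\<lambda>x. running_max (\<lambda>k. f k x) n)"
  using assms by (induction n) auto

lemma running_max_sq_le:
  fixes y :: "nat \<Rightarrow> real"
  shows "(running_max y N)\<^sup>2 / 2
    \<le> running_max y N * y N - (\<Sum>i<N. running_max y i * (y (Suc i) - y i))"
proof (induction N)
  case 0
  show ?case by (simp add: power2_eq_square)
next
  case (Suc N)
  let ?m = "running_max y N" and ?y = "y (Suc N)"
  have "((max ?m ?y)\<^sup>2 - ?m\<^sup>2) / 2 \<le> max ?m ?y * ?y - ?m * y N - ?m * (?y - y N)"
  proof (cases "?y \<le> ?m")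
    case False
    then have "max ?m ?y * ?y - ?m * y N - ?m * (?y - y N)
        = ((max ?m ?y)\<^sup>2 - ?m\<^sup>2) / 2 + (?y - ?m)\<^sup>2 / 2"
      by (simp add: field_simps power2_eq_square)
    then show ?thesis by simp
  qed (simp add: algebra_simps)
  with Suc.IH show ?case by (simp add: diff_divide_distrib algebra_simps)
qed

lemma power2_sum_eq:
  fixes \<xi> :: "nat \<Rightarrow> real"
  shows "(\<Sum>i<N. \<xi> i)\<^sup>2 = (\<Sum>i<N. (\<xi> i)\<^sup>2 + 2 * (\<Sum>j<i. \<xi> j) * \<xi> i)"
  by (induction N) (simp_all add: algebra_simps power2_eq_square)

lemma running_max_partial_sums_le:
  fixes \<xi> :: "nat \<Rightarrow> real"
  defines "y \<equiv> \<lambda>k. \<Sum>i<k. \<xi> i"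
  assumes "a > 0"
  shows "running_max y N \<le> a + (\<Sum>i<N. (\<xi> i)\<^sup>2 + (2 * y i - running_max y i) * \<xi> i) / a"
proof -
  let ?m = "running_max y N"
  let ?T = "\<Sum>i<N. (\<xi> i)\<^sup>2 + (2 * y i - running_max y i) * \<xi> i"
  have "?T = (y N)\<^sup>2 - (\<Sum>i<N. running_max y i * (y (Suc i) - y i))"
    unfolding power2_sum_eq y_def by (simp add: sum.distrib sum_subtractf algebra_simps)
  also have "\<dots> \<ge> ?m\<^sup>2 / 4"
    using running_max_sq_le[of y N] zero_le_power2[of "y N - ?m / 2"]
    by (simp add: power2_eq_square algebra_simps)
  finally have "?m\<^sup>2 / 4 / a \<le> ?T / a"
    using \<open>a > 0\<close> by (intro divide_right_mono) auto
  moreover have "?m \<le> a + ?m\<^sup>2 / 4 / a"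
    using zero_le_power2[of "?m - 2 * a"] \<open>a > 0\<close>
    by (simp add: field_simps power2_eq_square)
  ultimately show ?thesis by linarith
qed

definition walk_nonneg :: "nat \<Rightarrow> (nat \<Rightarrow> real) \<Rightarrow> bool" where
  "walk_nonneg L x \<longleftrightarrow> (\<forall>k\<in>{1..L}. 0 \<le> (\<Sum>i<k. x i))"

lemma walk_nonneg_cong: "(\<And>i. i < L \<Longrightarrow> x i = x' i) \<Longrightarrow> walk_nonneg L x = walk_nonneg L x'"
  unfolding walk_nonneg_def by (intro ball_cong arg_cong2[where f = "(\<le>)"] sum.cong) auto

lemma walk_nonneg_mono: "L \<le> L' \<Longrightarrow> walk_nonneg L' x \<Longrightarrow> walk_nonneg L x"
  unfolding walk_nonneg_def by auto

lemma walk_nonneg_shift_iff: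
  "walk_nonneg L (\<lambda>i. z (n + i)) \<longleftrightarrow> (\<forall>k\<in>{Suc n..n + L}. (\<Sum>i<n. z i) \<le> (\<Sum>i<k. z i))"
proof -
  have "(\<Sum>i<j. z (n + i)) = (\<Sum>i<n + j. z i) - (\<Sum>i<n. z i)" for j
    by (induction j) simp_all
  moreover have "{Suc n..n + L} = plus n ` {1..L}"
    by simp
  ultimately show ?thesis
    unfolding walk_nonneg_def by (simp del: image_add_atLeastAtMost)
qed

lemma ladder_count_le:
  fixes z :: "nat \<Rightarrow> real"
  defines "s \<equiv> \<lambda>k. \<Sum>i<k. z i"
  shows "(\<Sum>m<N. of_bool (1 \<le> z m \<and> walk_nonneg (N - Suc m) (\<lambda>i. z (Suc m + i))))
    \<le> s N - Min (s ` {..N})"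
proof -
  define R where "R j = Min (s ` {j..N})" for j
  have "of_bool (1 \<le> z m \<and> walk_nonneg (N - Suc m) (\<lambda>i. z (Suc m + i))) \<le> R (Suc m) - R m"
    if "m < N" for m
  proof -
    have R_m: "R m = min (s m) (R (Suc m))"
      using that by (simp add: R_def atLeastAtMost_insertL[symmetric] Min_insert)
    show ?thesis
    proof (cases "1 \<le> z m \<and> walk_nonneg (N - Suc m) (\<lambda>i. z (Suc m + i))")
      case True
      then have "walk_nonneg (N - Suc m) (\<lambda>i. z (Suc m + i))"
        by simp
      then have "\<forall>k\<in>{Suc (Suc m)..N}. s (Suc m) \<le> s k"
        unfolding walk_nonneg_shift_iff s_def using that by simp
      then have "R (Suc m) = s (Suc m)"
        unfolding R_def using that by (intro Min_eqI) (force simp: Suc_le_eq le_less)+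
      moreover have "s (Suc m) = s m + z m"
        by (simp add: s_def)
      ultimately show ?thesis
        using True R_m by auto
    qed (auto simp: R_m)
  qed
  then have "(\<Sum>m<N. of_bool (1 \<le> z m \<and> walk_nonneg (N - Suc m) (\<lambda>i. z (Suc m + i))))
      \<le> (\<Sum>m<N. R (Suc m) - R m)"
    by (intro sum_mono) simp
  also have "\<dots> = R N - R 0"
    by (rule sum_lessThan_telescope)
  also have "\<dots> = s N - Min (s ` {..N})"
    by (simp add: R_def atLeast0AtMost)
  finally show ?thesis .
qed

lemma ladder_count_le_running_max:
  fixes z :: "nat \<Rightarrow> real"
  assumes "\<mu> \<ge> 0"
  shows "(\<Sum>m<N. of_bool (1 \<le> z m \<and> walk_nonneg (N - Suc m) (\<lambda>i. z (Suc m + i))))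
    \<le> (\<Sum>i<N. z i) + running_max (\<lambda>k. \<Sum>i<k. \<mu> - z i) N"
proof -
  have "Min ((\<lambda>k. \<Sum>i<k. z i) ` {..N}) \<in> (\<lambda>k. \<Sum>i<k. z i) ` {..N}"
    by (intro Min_in) auto
  then obtain k where "k \<le> N" and k_min: "Min ((\<lambda>k. \<Sum>i<k. z i) ` {..N}) = (\<Sum>i<k. z i)"
    unfolding image_iff atMost_iff by blast
  have "- (\<Sum>i<k. z i) \<le> (\<Sum>i<k. \<mu> - z i)"
    using assms by (simp add: sum_subtractf)
  also have "\<dots> \<le> running_max (\<lambda>k. \<Sum>i<k. \<mu> - z i) N"
    using \<open>k \<le> N\<close> by (rule running_max_ge)
  finally show ?thesis
    using ladder_count_le[of z N] k_min by simp
qed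

text \<open>Unlike \<open>measurable_component_singleton\<close>, this needs no proof of \<open>k \<in> J\<close>, which the
  measurability prover cannot supply for bound indices.\<close>

lemma measurable_component_PiM_borel[measurable]:
  "(\<lambda>f. f k) \<in> borel_measurable (PiM J (\<lambda>_. borel :: 'b::topological_space measure))"
proof (cases "k \<in> J")
  case False
  then show ?thesis
    by (subst measurable_cong[where g = "\<lambda>_. undefined"])
      (auto simp: space_PiM PiE_def extensional_def)
qed simp

lemma measurable_walk_nonneg[measurable (raw)]:
  assumes [measurable]: "\<And>i. f i \<in> borel_measurable M"
  shows "Measurable.pred M (\<lambda>\<omega>. walk_nonneg L (\<lambda>i. f i \<omega>))"
  unfolding walk_nonneg_def by measurable

lemma integral_of_bool: "(\<integral>\<omega>. of_bool (P \<omega>) \<partial>M) = measure M {\<omega> \<in> space M. P \<omega>}"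
proof -
  have "(\<integral>\<omega>. of_bool (P \<omega>) \<partial>M) = (\<integral>\<omega>. indicator {\<omega> \<in> space M. P \<omega>} \<omega> \<partial>M)"
    by (rule Bochner_Integration.integral_cong) (auto simp: indicator_def)
  also have "\<dots> = measure M {\<omega> \<in> space M. P \<omega>}"
    by (simp add: Int_absorb2)
  finally show ?thesis .
qed

locale iid_sequence = prob_space M for M :: "'a measure" +
  fixes X :: "nat \<Rightarrow> 'a \<Rightarrow> real"
  assumes measurable_X[measurable]: "\<And>i. X i \<in> borel_measurable M"
    and indep_X: "indep_vars (\<lambda>_. borel) X UNIV"
    and distr_X: "\<And>i. distr M borel (X i) = distr M borel (X 0)"
begin

lemma integral_X_comp:
  assumes [measurable]: "f \<in> borel_measurable borel"
  shows "(\<integral>\<omega>. f (X i \<omega>) \<partial>M) = (\<integral>\<omega>. (f (X 0 \<omega>) :: real) \<partial>M)"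
  using integral_distr[of "X i" M borel f] integral_distr[of "X 0" M borel f]
  by (simp add: distr_X[of i])

lemma integrable_X_comp_iff:
  assumes [measurable]: "f \<in> borel_measurable borel"
  shows "integrable M (\<lambda>\<omega>. f (X i \<omega>) :: real) \<longleftrightarrow> integrable M (\<lambda>\<omega>. f (X 0 \<omega>))"
  using integrable_distr_eq[of "X i" M borel f] integrable_distr_eq[of "X 0" M borel f]
  by (simp add: distr_X[of i])

lemma indep_var_X_comp_restrict:
  assumes "i \<notin> J"
    and [measurable]: "f \<in> borel_measurable borel" "g \<in> borel_measurable (PiM J (\<lambda>_. borel))"
  shows "indep_var borel (\<lambda>\<omega>. f (X i \<omega>) :: real) borel (\<lambda>\<omega>. g (\<lambda>j\<in>J. X j \<omega>) :: real)"
proof -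
  have "indep_var (PiM {i} (\<lambda>_. borel)) (\<lambda>\<omega>. \<lambda>j\<in>{i}. X j \<omega>) (PiM J (\<lambda>_. borel)) (\<lambda>\<omega>. \<lambda>j\<in>J. X j \<omega>)"
    using \<open>i \<notin> J\<close> by (intro indep_var_restrict[OF indep_X]) auto
  then have "indep_var borel ((\<lambda>h. f (h i)) \<circ> (\<lambda>\<omega>. \<lambda>j\<in>{i}. X j \<omega>)) borel (g \<circ> (\<lambda>\<omega>. \<lambda>j\<in>J. X j \<omega>))"
    by (rule indep_var_compose) measurable
  then show ?thesis
    by (simp add: comp_def)
qed

lemma distr_X_block:
  assumes "L > 0"
  shows "distr M (PiM {..<L} (\<lambda>_. borel)) (\<lambda>\<omega>. \<lambda>i\<in>{..<L}. X (n + i) \<omega>)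
    = PiM {..<L} (\<lambda>_. distr M borel (X 0))"
proof -
  let ?K = "{n..<n + L}" and ?D = "distr M borel (X 0)"
  have "distr M (PiM ?K (\<lambda>_. borel)) (\<lambda>\<omega>. \<lambda>i\<in>?K. X i \<omega>) = PiM ?K (\<lambda>i. distr M borel (X i))"
    using indep_vars_subset[OF indep_X] assms by (subst indep_vars_iff_distr_eq_PiM[symmetric]) auto
  also have "\<dots> = PiM ?K (\<lambda>_. ?D)"
    by (rule PiM_cong) (auto intro: distr_X)
  finally have distr_K: "distr M (PiM ?K (\<lambda>_. borel)) (\<lambda>\<omega>. \<lambda>i\<in>?K. X i \<omega>) = PiM ?K (\<lambda>_. ?D)" .
  have "distr M (PiM {..<L} (\<lambda>_. borel)) (\<lambda>\<omega>. \<lambda>i\<in>{..<L}. X (n + i) \<omega>)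
      = distr M (PiM {..<L} (\<lambda>_. borel)) ((\<lambda>f. \<lambda>i\<in>{..<L}. f (n + i)) \<circ> (\<lambda>\<omega>. \<lambda>i\<in>?K. X i \<omega>))"
    by (rule distr_cong) (auto simp: comp_def)
  also have "\<dots> = distr (distr M (PiM ?K (\<lambda>_. borel)) (\<lambda>\<omega>. \<lambda>i\<in>?K. X i \<omega>))
      (PiM {..<L} (\<lambda>_. borel)) (\<lambda>f. \<lambda>i\<in>{..<L}. f (n + i))"
    by (rule distr_distr[symmetric]) measurable
  also have "\<dots> = distr (PiM ?K (\<lambda>_. ?D)) (PiM {..<L} (\<lambda>_. ?D)) (\<lambda>f. \<lambda>i\<in>{..<L}. f (n + i))"
    unfolding distr_K by (rule distr_cong) (auto intro!: sets_PiM_cong)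
  also have "\<dots> = PiM {..<L} (\<lambda>_. ?D)"
    using distr_PiM_reindex[of ?K "\<lambda>_. ?D" "plus n" "{..<L}"] prob_space_distr[of "X 0"] by auto
  finally show ?thesis .
qed

lemma integral_X_block_shift:
  assumes [measurable]: "h \<in> borel_measurable (PiM {..<L} (\<lambda>_. borel))"
  shows "(\<integral>\<omega>. h (\<lambda>i\<in>{..<L}. X (n + i) \<omega>) \<partial>M) = (\<integral>\<omega>. (h (\<lambda>i\<in>{..<L}. X i \<omega>) :: real) \<partial>M)"
proof (cases "L = 0")
  case False
  then show ?thesis
    using integral_distr[of "\<lambda>\<omega>. \<lambda>i\<in>{..<L}. X (n + i) \<omega>" M "PiM {..<L} (\<lambda>_. borel)" h]
      integral_distr[of "\<lambda>\<omega>. \<lambda>i\<in>{..<L}. X (0 + i) \<omega>" M "PiM {..<L} (\<lambda>_. borel)" h]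
    by (simp add: distr_X_block[of L n] distr_X_block[of L 0, simplified])
qed (simp add: restrict_def)

lemma prob_walk_nonneg_shift:
  "prob {\<omega> \<in> space M. walk_nonneg L (\<lambda>i. X (n + i) \<omega>)} = prob {\<omega> \<in> space M. walk_nonneg L (\<lambda>i. X i \<omega>)}"
proof -
  have "walk_nonneg L (\<lambda>i\<in>{..<L}. f i) = walk_nonneg L f" for f
    by (rule walk_nonneg_cong) simp
  then show ?thesis
    using integral_X_block_shift[of "\<lambda>f. of_bool (walk_nonneg L f)" L n]
    by (simp add: integral_of_bool)
qed

lemma prob_ladder_event:
  "prob {\<omega> \<in> space M. 1 \<le> X m \<omega> \<and> walk_nonneg L (\<lambda>i. X (Suc m + i) \<omega>)}
    = prob {\<omega> \<in> space M. 1 \<le> X 0 \<omega>} * prob {\<omega> \<in> space M. walk_nonneg L (\<lambda>i. X i \<omega>)}"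
proof -
  let ?J = "{Suc m..<Suc m + L}"
  let ?f = "\<lambda>x. of_bool (1 \<le> x) :: real"
  let ?g = "\<lambda>h. of_bool (walk_nonneg L (\<lambda>i. h (Suc m + i))) :: real"
  have g_restrict: "?g (\<lambda>j\<in>?J. X j \<omega>) = of_bool (walk_nonneg L (\<lambda>i. X (Suc m + i) \<omega>))" for \<omega>
    by (intro arg_cong[where f = of_bool] walk_nonneg_cong) simp
  have indep: "indep_var borel (\<lambda>\<omega>. ?f (X m \<omega>)) borel (\<lambda>\<omega>. ?g (\<lambda>j\<in>?J. X j \<omega>))"
    by (rule indep_var_X_comp_restrict) auto
  have prob_X_ge: "prob {\<omega> \<in> space M. 1 \<le> X m \<omega>} = prob {\<omega> \<in> space M. 1 \<le> X 0 \<omega>}"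
    using integral_X_comp[of ?f m] by (simp add: integral_of_bool)
  have "prob {\<omega> \<in> space M. 1 \<le> X m \<omega> \<and> walk_nonneg L (\<lambda>i. X (Suc m + i) \<omega>)}
      = expectation (\<lambda>\<omega>. ?f (X m \<omega>) * ?g (\<lambda>j\<in>?J. X j \<omega>))"
    unfolding g_restrict integral_of_bool[symmetric] by (simp add: of_bool_conj)
  also have "\<dots> = expectation (\<lambda>\<omega>. ?f (X m \<omega>)) * expectation (\<lambda>\<omega>. ?g (\<lambda>j\<in>?J. X j \<omega>))"
    by (rule indep_var_lebesgue_integral[OF indep])
      (auto intro!: integrable_const_bound[where B = 1])
  also have "\<dots> = prob {\<omega> \<in> space M. 1 \<le> X 0 \<omega>} * prob {\<omega> \<in> space M. walk_nonneg L (\<lambda>i. X i \<omega>)}"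
    unfolding g_restrict integral_of_bool prob_walk_nonneg_shift prob_X_ge ..
  finally show ?thesis .
qed

lemma integrable_X_iff: "integrable M (X i) \<longleftrightarrow> integrable M (X 0)"
  using integrable_X_comp_iff[of "\<lambda>x. x" i] by simp

lemma
  assumes "integrable M (X 0)"
    and [measurable]: "g \<in> borel_measurable (PiM {..<i} (\<lambda>_. borel))"
    and g_int: "integrable M (\<lambda>\<omega>. g (\<lambda>j\<in>{..<i}. X j \<omega>))"
  shows integrable_block_mult_centered_X:
      "integrable M (\<lambda>\<omega>. g (\<lambda>j\<in>{..<i}. X j \<omega>) * (expectation (X 0) - X i \<omega>))"
    and integral_block_mult_centered_X:
      "expectation (\<lambda>\<omega>. g (\<lambda>j\<in>{..<i}. X j \<omega>) * (expectation (X 0) - X i \<omega>)) = 0"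
proof -
  let ?f = "\<lambda>x. expectation (X 0) - x"
  have indep: "indep_var borel (\<lambda>\<omega>. ?f (X i \<omega>)) borel (\<lambda>\<omega>. g (\<lambda>j\<in>{..<i}. X j \<omega>))"
    by (rule indep_var_X_comp_restrict) auto
  have f_int: "integrable M (\<lambda>\<omega>. ?f (X i \<omega>))"
    using assms(1) integrable_X_iff[of i] by simp
  show "integrable M (\<lambda>\<omega>. g (\<lambda>j\<in>{..<i}. X j \<omega>) * ?f (X i \<omega>))"
    using indep_var_integrable[OF indep f_int g_int] by (simp add: mult.commute)
  have "expectation (\<lambda>\<omega>. ?f (X i \<omega>)) = 0"
    using integral_X_comp[of ?f i] assms(1) by (simp add: prob_space)
  then show "expectation (\<lambda>\<omega>. g (\<lambda>j\<in>{..<i}. X j \<omega>) * ?f (X i \<omega>)) = 0"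
    using indep_var_lebesgue_integral[OF indep f_int g_int] by (simp add: mult.commute)
qed

end

locale iid_sequence_L2 = iid_sequence +
  assumes square_integrable_X: "integrable M (\<lambda>\<omega>. (X 0 \<omega>)\<^sup>2)"
begin

lemma integrable_X: "integrable M (X i)"
  using square_integrable_imp_integrable[OF measurable_X square_integrable_X] integrable_X_iff by simp

lemma integrable_square_diff_X: "integrable M (\<lambda>\<omega>. (c - X i \<omega>)\<^sup>2)"
proof -
  have "integrable M (\<lambda>\<omega>. c\<^sup>2 - 2 * c * X 0 \<omega> + (X 0 \<omega>)\<^sup>2)"
    using integrable_X square_integrable_X by auto
  then show ?thesis
    using integrable_X_comp_iff[of "\<lambda>x. (c - x)\<^sup>2" i] by (simp add: power2_diff algebra_simps)
qed

lemma integral_square_centered_X: "expectation (\<lambda>\<omega>. (expectation (X 0) - X i \<omega>)\<^sup>2) = variance (X 0)"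
  using integral_X_comp[of "\<lambda>x. (expectation (X 0) - x)\<^sup>2" i] by (simp add: power2_commute)

lemma expectation_running_max_centered_walk_le:
  assumes "a > 0"
  shows "expectation (\<lambda>\<omega>. running_max (\<lambda>k. \<Sum>l<k. expectation (X 0) - X l \<omega>) N)
    \<le> a + N * variance (X 0) / a"
proof -
  let ?\<mu> = "expectation (X 0)"
  define y where "y \<omega> = (\<lambda>k. \<Sum>l<k. ?\<mu> - X l \<omega>)" for \<omega>
  define T where "T \<omega> = (\<Sum>i<N. (?\<mu> - X i \<omega>)\<^sup>2 + (2 * y \<omega> i - running_max (y \<omega>) i) * (?\<mu> - X i \<omega>))" for \<omega>
  have int_y: "integrable M (\<lambda>\<omega>. y \<omega> k)" for k
    unfolding y_def using integrable_X by auto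
  define g where "g i h = 2 * (\<Sum>l<i. ?\<mu> - h l) - running_max (\<lambda>k. \<Sum>l<k. ?\<mu> - h l) i" for i h
  have g_restrict: "g i (\<lambda>j\<in>{..<i}. X j \<omega>) = 2 * y \<omega> i - running_max (y \<omega>) i" for i \<omega>
    unfolding g_def y_def by (auto intro!: running_max_cong sum.cong)
  have [measurable]: "g i \<in> borel_measurable (PiM {..<i} (\<lambda>_. borel))" for i
    unfolding g_def by measurable
  have g_int: "integrable M (\<lambda>\<omega>. g i (\<lambda>j\<in>{..<i}. X j \<omega>))" for i
    unfolding g_restrict using int_y by (auto intro!: integrable_running_max)
  note cross_int = integrable_block_mult_centered_X[OF integrable_X _ g_int, unfolded g_restrict]
  note cross_zero = integral_block_mult_centered_X[OF integrable_X _ g_int, unfolded g_restrict]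
  have int_T: "integrable M T"
    unfolding T_def using integrable_square_diff_X cross_int by auto
  have "expectation T = N * variance (X 0)"
    unfolding T_def using integrable_square_diff_X cross_int
    by (simp add: cross_zero integral_square_centered_X)
  moreover have "running_max (y \<omega>) N \<le> a + T \<omega> / a" for \<omega>
    using running_max_partial_sums_le[OF \<open>a > 0\<close>, of "\<lambda>l. ?\<mu> - X l \<omega>" N]
    by (simp add: T_def y_def)
  then have "expectation (\<lambda>\<omega>. running_max (y \<omega>) N) \<le> expectation (\<lambda>\<omega>. a + T \<omega> / a)"
    using int_T int_y by (intro integral_mono) (auto intro!: integrable_running_max)
  ultimately show ?thesis
    using int_T by (simp add: y_def prob_space)
qed

theorem prob_walk_nonneg_bound:
  assumes "expectation (X 0) \<ge> 0" and "a > 0"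
  shows "N * (prob {\<omega> \<in> space M. 1 \<le> X 0 \<omega>} * prob {\<omega> \<in> space M. walk_nonneg N (\<lambda>i. X i \<omega>)})
    \<le> N * expectation (X 0) + a + N * variance (X 0) / a"
proof -
  let ?\<mu> = "expectation (X 0)"
  let ?\<delta>P = "prob {\<omega> \<in> space M. 1 \<le> X 0 \<omega>} * prob {\<omega> \<in> space M. walk_nonneg N (\<lambda>i. X i \<omega>)}"
  define ladder where "ladder m \<omega> \<longleftrightarrow> 1 \<le> X m \<omega> \<and> walk_nonneg (N - Suc m) (\<lambda>i. X (Suc m + i) \<omega>)"
    for m \<omega>
  define W where "W \<omega> = running_max (\<lambda>k. \<Sum>l<k. ?\<mu> - X l \<omega>) N" for \<omega>
  have [measurable]: "Measurable.pred M (ladder m)" for m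
    unfolding ladder_def by measurable
  have int_ladders: "integrable M (\<lambda>\<omega>. \<Sum>m<N. of_bool (ladder m \<omega>) :: real)"
    by (intro Bochner_Integration.integrable_sum integrable_const_bound[where B = 1]) auto
  have int_W: "integrable M W"
    unfolding W_def using integrable_X by (auto intro!: integrable_running_max)
  have ladders_le: "(\<Sum>m<N. of_bool (ladder m \<omega>)) \<le> (\<Sum>i<N. X i \<omega>) + W \<omega>" for \<omega>
    unfolding ladder_def W_def by (rule ladder_count_le_running_max[OF assms(1)])
  have ladder_prob_ge: "?\<delta>P \<le> prob {\<omega> \<in> space M. ladder m \<omega>}" for m
    unfolding ladder_def prob_ladder_event
    by (intro mult_left_mono finite_measure_mono) (auto elim: walk_nonneg_mono[rotated])
  have mean_sum: "(\<Sum>i<N. expectation (X i)) = N * ?\<mu>"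
    using sum.cong[OF refl integral_X_comp[of "\<lambda>x. x"], of "{..<N}"] by simp
  have "N * ?\<delta>P \<le> (\<Sum>m<N. prob {\<omega> \<in> space M. ladder m \<omega>})"
    using sum_mono[of "{..<N}", OF ladder_prob_ge] by simp
  also have "\<dots> = expectation (\<lambda>\<omega>. \<Sum>m<N. of_bool (ladder m \<omega>))"
    unfolding integral_of_bool[symmetric]
    by (rule Bochner_Integration.integral_sum[symmetric]) (auto intro: integrable_const_bound[where B = 1])
  also have "\<dots> \<le> expectation (\<lambda>\<omega>. (\<Sum>i<N. X i \<omega>) + W \<omega>)"
    using int_ladders int_W integrable_X ladders_le by (intro integral_mono) auto
  also have "\<dots> = N * ?\<mu> + expectation W"
    using int_W integrable_X mean_sum by simp
  also have "\<dots> \<le> N * ?\<mu> + a + N * variance (X 0) / a"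
    using expectation_running_max_centered_walk_le[OF \<open>a > 0\<close>, of N] by (simp add: W_def[abs_def])
  finally show ?thesis .
qed

corollary prob_walk_nonneg_le:
  assumes "expectation (X 0) \<ge> 0" and "variance (X 0) > 0"
    and "prob {\<omega> \<in> space M. 1 \<le> X 0 \<omega>} > 0" and "N \<ge> 1"
  shows "prob {\<omega> \<in> space M. walk_nonneg N (\<lambda>i. X i \<omega>)}
    \<le> 2 * sqrt (variance (X 0)) / (prob {\<omega> \<in> space M. 1 \<le> X 0 \<omega>} * sqrt N)
      + expectation (X 0) / prob {\<omega> \<in> space M. 1 \<le> X 0 \<omega>}"
proof -
  let ?\<sigma> = "sqrt (variance (X 0))" and ?n = "sqrt N"
    and ?\<delta> = "prob {\<omega> \<in> space M. 1 \<le> X 0 \<omega>}" and ?P = "prob {\<omega> \<in> space M. walk_nonneg N (\<lambda>i. X i \<omega>)}"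
  have pos: "?\<sigma> > 0" "?n > 0"
    using assms(2,4) by auto
  have "?n\<^sup>2 * (?\<delta> * ?P) \<le> ?n\<^sup>2 * expectation (X 0) + ?\<sigma> * ?n + ?n\<^sup>2 * ?\<sigma>\<^sup>2 / (?\<sigma> * ?n)"
    using prob_walk_nonneg_bound[OF assms(1), of "?\<sigma> * ?n" N] pos assms(2) by simp
  also have "\<dots> = ?n\<^sup>2 * (expectation (X 0) + 2 * ?\<sigma> / ?n)"
    using pos by (simp add: field_simps power2_eq_square)
  finally have "?\<delta> * ?P \<le> expectation (X 0) + 2 * ?\<sigma> / ?n"
    using pos by simp
  then show ?thesis
    using assms(3) by (simp add: field_simps)
qed

end

theorem proposition4p7:
  fixes M :: "'a measure" and X :: "nat \<Rightarrow> 'a \<Rightarrow> real" and N :: nat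
  assumes "prob_space M"
    and rv: "\<And>i. X i \<in> borel_measurable M"
    and indep: "prob_space.indep_vars M (\<lambda>_. borel) X UNIV"
    and ident: "\<And>i. distr M borel (X i) = distr M borel (X 0)"
    and sq_int: "integrable M (\<lambda>\<omega>. (X 0 \<omega>)\<^sup>2)"
    and mean_nonneg: "prob_space.expectation M (X 0) \<ge> 0"
    and var_pos: "prob_space.variance M (X 0) > 0"
    and delta_pos: "prob_space.prob M {\<omega> \<in> space M. X 0 \<omega> \<ge> 1} > 0"
    and "N \<ge> 1"
  shows "prob_space.prob M {\<omega> \<in> space M. \<forall>k\<in>{1..N}. (\<Sum>i<k. X i \<omega>) \<ge> 0}
     \<le> 4 * sqrt (prob_space.variance M (X 0))
           / (prob_space.prob M {\<omega> \<in> space M. X 0 \<omega> \<ge> 1} * sqrt (real N))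
       + prob_space.expectation M (X 0) / prob_space.prob M {\<omega> \<in> space M. X 0 \<omega> \<ge> 1}"
proof -
  interpret iid_sequence_L2 M X
    using assms(1-5) by (intro iid_sequence_L2.intro iid_sequence.intro iid_sequence_axioms.intro
        iid_sequence_L2_axioms.intro)
  have "2 * sqrt (variance (X 0)) / (prob {\<omega> \<in> space M. X 0 \<omega> \<ge> 1} * sqrt N)
      \<le> 4 * sqrt (variance (X 0)) / (prob {\<omega> \<in> space M. X 0 \<omega> \<ge> 1} * sqrt N)"
    by (intro divide_right_mono) auto
  then show ?thesis
    using prob_walk_nonneg_le[OF mean_nonneg var_pos delta_pos \<open>N \<ge> 1\<close>]
    unfolding walk_nonneg_def by simp
qed

end
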